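(* Let $\mathcal{A}$ and $\mathcal{B}$ be unital algebras over a field of characteristic zero, let $\mathcal{M}$ be an $(\mathcal{A},\mathcal{B})$-bimodule which is faithful as a left $\mathcal{A}$-module and as a right $\mathcal{B}$-module, and let $\mathcal{T}=Tri(\mathcal{A},\mathcal{M},\mathcal{B})$ be the associated (unital) triangular algebra, with identity $\mathbf{1}$ and center $Z(\mathcal{T})$. Let $n>1$ be an integer, let $\gamma$ be an invertible element of $Z(\mathcal{T})$, and let $\Psi,\Omega:\mathcal{T}\to\mathcal{T}$ be additive mappings satisfying \[ \Psi(X^n)=\gamma X\,\Omega(X^{n-1})=\gamma\,\Omega(X^{n-1})X\quad\text{for all } X\in\mathcal{T}. \] If $\Omega(\mathbf{1})\in Z(\mathcal{T})$, then $\Psi$ and $\Omega$ are two-sided centralizers on $\mathcal{T}$ and $\Psi=\gamma\Omega$.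
   Context: For algebras $\mathcal{A},\mathcal{B}$ and an $(\mathcal{A},\mathcal{B})$-bimodule $\mathcal{M}$, the triangular algebra $Tri(\mathcal{A},\mathcal{M},\mathcal{B})$ is the set of matrices $\begin{bmatrix} a & m\\ 0 & b\end{bmatrix}$ with $a\in\mathcal{A}$, $m\in\mathcal{M}$, $b\in\mathcal{B}$, under the usual matrix operations; it is unital when $\mathcal{A}$ and $\mathcal{B}$ are. Its center is $Z(\mathcal{T})=\{a\oplus b: a\in Z(\mathcal{A}),\ b\in Z(\mathcal{B}),\ am=mb \text{ for all } m\in\mathcal{M}\}$. An additive map $T:\mathcal{T}\to\mathcal{T}$ is a two-sided centralizer if $T(XY)=T(X)Y=XT(Y)$ for all $X,Y\in\mathcal{T}$. *)

theory Defs
  imports Complex_Main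
begin

definition unital_algebra :: "('k::field \<Rightarrow> 'a::ring_1 \<Rightarrow> 'a) \<Rightarrow> bool" where
  "unital_algebra s \<longleftrightarrow> module s \<and>
     (\<forall>c x y. s c (x * y) = s c x * y \<and> s c (x * y) = x * s c y)"

definition bimodule ::
  "('k::field \<Rightarrow> 'a::ring_1 \<Rightarrow> 'a) \<Rightarrow> ('k \<Rightarrow> 'b::ring_1 \<Rightarrow> 'b) \<Rightarrow> ('k \<Rightarrow> 'm::ab_group_add \<Rightarrow> 'm)
   \<Rightarrow> ('a \<Rightarrow> 'm \<Rightarrow> 'm) \<Rightarrow> ('m \<Rightarrow> 'b \<Rightarrow> 'm) \<Rightarrow> bool" where
  "bimodule sA sB sM lA rB \<longleftrightarrow> module sM \<and>
     (\<forall>a a' m. lA (a * a') m = lA a (lA a' m)) \<and> (\<forall>m. lA 1 m = m) \<and>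
     (\<forall>a a' m. lA (a + a') m = lA a m + lA a' m) \<and>
     (\<forall>a m m'. lA a (m + m') = lA a m + lA a m') \<and>
     (\<forall>b b' m. rB m (b * b') = rB (rB m b) b') \<and> (\<forall>m. rB m 1 = m) \<and>
     (\<forall>b b' m. rB m (b + b') = rB m b + rB m b') \<and>
     (\<forall>b m m'. rB (m + m') b = rB m b + rB m' b) \<and>
     (\<forall>a m b. lA a (rB m b) = rB (lA a m) b) \<and>
     (\<forall>c a m. sM c (lA a m) = lA (sA c a) m \<and> sM c (lA a m) = lA a (sM c m)) \<and>
     (\<forall>c m b. sM c (rB m b) = rB m (sB c b) \<and> sM c (rB m b) = rB (sM c m) b)"

definition faithful_left :: "('a::ring_1 \<Rightarrow> 'm::ab_group_add \<Rightarrow> 'm) \<Rightarrow> bool" where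
  "faithful_left lA \<longleftrightarrow> (\<forall>a. (\<forall>m. lA a m = 0) \<longrightarrow> a = 0)"

definition faithful_right :: "('m::ab_group_add \<Rightarrow> 'b::ring_1 \<Rightarrow> 'm) \<Rightarrow> bool" where
  "faithful_right rB \<longleftrightarrow> (\<forall>b. (\<forall>m. rB m b = 0) \<longrightarrow> b = 0)"

text \<open>The triangular algebra Tri(A,M,B): the matrix [a m; 0 b] is the triple (a,m,b).\<close>
type_synonym ('a,'m,'b) tri = "'a \<times> 'm \<times> 'b"

fun tadd :: "('a::ring_1,'m::ab_group_add,'b::ring_1) tri \<Rightarrow> ('a,'m,'b) tri \<Rightarrow> ('a,'m,'b) tri" where
  "tadd (a,m,b) (a',m',b') = (a + a', m + m', b + b')"

fun tmul :: "('a::ring_1 \<Rightarrow> 'm::ab_group_add \<Rightarrow> 'm) \<Rightarrow> ('m \<Rightarrow> 'b::ring_1 \<Rightarrow> 'm)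
   \<Rightarrow> ('a,'m,'b) tri \<Rightarrow> ('a,'m,'b) tri \<Rightarrow> ('a,'m,'b) tri" where
  "tmul lA rB (a,m,b) (a',m',b') = (a * a', lA a m' + rB m b', b * b')"

definition tone :: "('a::ring_1,'m::ab_group_add,'b::ring_1) tri" where
  "tone = (1, 0, 1)"

fun tpow :: "('a::ring_1 \<Rightarrow> 'm::ab_group_add \<Rightarrow> 'm) \<Rightarrow> ('m \<Rightarrow> 'b::ring_1 \<Rightarrow> 'm)
   \<Rightarrow> ('a,'m,'b) tri \<Rightarrow> nat \<Rightarrow> ('a,'m,'b) tri" where
  "tpow lA rB X 0 = tone"
| "tpow lA rB X (Suc k) = tmul lA rB X (tpow lA rB X k)"

definition tcenter :: "('a::ring_1 \<Rightarrow> 'm::ab_group_add \<Rightarrow> 'm) \<Rightarrow> ('m \<Rightarrow> 'b::ring_1 \<Rightarrow> 'm)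
   \<Rightarrow> ('a,'m,'b) tri set" where
  "tcenter lA rB = {Z. \<forall>X. tmul lA rB Z X = tmul lA rB X Z}"

definition tadditive :: "(('a::ring_1,'m::ab_group_add,'b::ring_1) tri \<Rightarrow> ('a,'m,'b) tri) \<Rightarrow> bool" where
  "tadditive f \<longleftrightarrow> (\<forall>X Y. f (tadd X Y) = tadd (f X) (f Y))"

definition two_sided_centralizer :: "('a::ring_1 \<Rightarrow> 'm::ab_group_add \<Rightarrow> 'm) \<Rightarrow> ('m \<Rightarrow> 'b::ring_1 \<Rightarrow> 'm)
   \<Rightarrow> (('a,'m,'b) tri \<Rightarrow> ('a,'m,'b) tri) \<Rightarrow> bool" where
  "two_sided_centralizer lA rB T \<longleftrightarrow> tadditive T \<and>
     (\<forall>X Y. T (tmul lA rB X Y) = tmul lA rB (T X) Y \<and> T (tmul lA rB X Y) = tmul lA rB X (T Y))"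

end

theory Submission
  imports Defs "HOL-Library.Product_Plus" "HOL-Computational_Algebra.Polynomial"
begin

text \<open>Substituting X + k*1 for X (k = 0, 1, 2, ...) turns the hypothesis into a polynomial identity
  in k with coefficients in T, and as the scalars have characteristic zero every coefficient
  vanishes. With m = n - 1 and \<omega> = \<Omega>(1), the coefficient of k^m gives
  n\<Psi>(X) = \<gamma>X\<omega> + m\<gamma>\<Omega>(X); the coefficient of k^(m-1), compared between the two
  forms of the hypothesis, gives X\<Omega>(X) = \<Omega>(X)X, and together with the former at X^2 it
  gives \<Omega>(X^2) = 2X\<Omega>(X) - X^2\<omega>. Hence D(X) = \<Omega>(X) - \<omega>X is additive with
  D(X^2) = 2XD(X) and XD(X) = D(X)X. Testing these identities against the idempotent diag(1,0)
  and the three corners of T, faithfulness of M forces D = 0, so \<Omega>(X) = \<omega>X and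
  \<Psi>(X) = \<gamma>\<omega>X are multiplications by central elements.\<close>

lemma vector_space_poly_coeffs_eq_0:
  fixes s :: "'k::field_char_0 \<Rightarrow> 'v::ab_group_add \<Rightarrow> 'v"
  assumes vs: "vector_space s"
    and vanish: "\<And>k::nat. (\<Sum>i\<le>N. s (of_nat k ^ i) (c i)) = 0"
    and "j \<le> N"
  shows "c j = 0"
proof (rule ccontr)
  assume cj: "c j \<noteq> 0"
  interpret vs: vector_space_pair s "(*) :: 'k \<Rightarrow> 'k \<Rightarrow> 'k"
    using vs by (simp add: vector_space_pair_def vector_space_def algebra_simps)
  have ind: "vs.vs1.independent {c j}"
    using cj by (simp add: vs.vs1.independent_insert)
  define f where "f = vs.construct {c j} (\<lambda>_. 1)"
  interpret f: Vector_Spaces.linear s "(*) :: 'k \<Rightarrow> 'k \<Rightarrow> 'k" f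
    unfolding f_def by (rule vs.linear_construct[OF ind])
  have f_cj: "f (c j) = 1"
    unfolding f_def by (rule vs.construct_basis[OF ind]) simp
  define p where "p = (\<Sum>i\<le>N. monom (f (c i)) i)"
  have "poly p (of_nat k) = 0" for k :: nat
    using arg_cong[OF vanish[of k], of f]
    by (simp add: p_def poly_sum poly_monom f.sum f.scale mult.commute)
  then have "range (of_nat :: nat \<Rightarrow> 'k) \<subseteq> {x. poly p x = 0}"
    by auto
  moreover have "infinite (range (of_nat :: nat \<Rightarrow> 'k))"
    by (simp add: range_inj_infinite inj_of_nat)
  ultimately have "p = 0"
    using poly_roots_finite finite_subset by blast
  then show False
    using coeff_sum_monom[OF \<open>j \<le> N\<close>, of "\<lambda>i. f (c i)"] f_cj by (simp add: p_def)
qed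

lemma vector_space_poly_coeffs_eq_0_rev:
  fixes s :: "'k::field_char_0 \<Rightarrow> 'v::ab_group_add \<Rightarrow> 'v"
  assumes vs: "vector_space s"
    and vanish: "\<And>k::nat. (\<Sum>i\<le>N. s (of_nat k ^ (N - i)) (c i)) = 0"
    and "j \<le> N"
  shows "c j = 0"
proof -
  have "(\<Sum>i\<le>N. s (of_nat k ^ i) (c (N - i))) = (\<Sum>i\<le>N. s (of_nat k ^ (N - i)) (c i))" for k :: nat
    by (rule sum.reindex_bij_witness[where i="\<lambda>i. N - i" and j="\<lambda>i. N - i"]) auto
  then show ?thesis
    using vector_space_poly_coeffs_eq_0[OF vs, where N=N and c="\<lambda>i. c (N - i)" and j="N - j"] vanish \<open>j \<le> N\<close>
    by simp
qed

lemma tadd_eq_plus: "tadd X Y = X + Y"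
  by (cases X; cases Y) auto

lemma tadditive_iff_additive: "tadditive F \<longleftrightarrow> additive F"
  by (simp add: tadditive_def additive_def tadd_eq_plus)

locale triangular_algebra =
  fixes sA :: "'k::field_char_0 \<Rightarrow> 'a::ring_1 \<Rightarrow> 'a"
    and sB :: "'k \<Rightarrow> 'b::ring_1 \<Rightarrow> 'b"
    and sM :: "'k \<Rightarrow> 'm::ab_group_add \<Rightarrow> 'm"
    and lA :: "'a \<Rightarrow> 'm \<Rightarrow> 'm"
    and rB :: "'m \<Rightarrow> 'b \<Rightarrow> 'm"
  assumes unital_A: "unital_algebra sA" and unital_B: "unital_algebra sB"
    and bimodule: "bimodule sA sB sM lA rB"
begin

abbreviation times_tri :: "('a,'m,'b) tri \<Rightarrow> ('a,'m,'b) tri \<Rightarrow> ('a,'m,'b) tri" (infixl "\<cdot>" 80)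
  where "X \<cdot> Y \<equiv> tmul lA rB X Y"

abbreviation power_tri :: "('a,'m,'b) tri \<Rightarrow> nat \<Rightarrow> ('a,'m,'b) tri" (infixr "^\<^sub>T" 85)
  where "X ^\<^sub>T k \<equiv> tpow lA rB X k"

definition scale_tri :: "'k \<Rightarrow> ('a,'m,'b) tri \<Rightarrow> ('a,'m,'b) tri" (infixr "*\<^sub>T" 75)
  where "c *\<^sub>T X = (sA c (fst X), sM c (fst (snd X)), sB c (snd (snd X)))"

lemma scale_tri_simp [simp]: "c *\<^sub>T (a, m, b) = (sA c a, sM c m, sB c b)"
  by (simp add: scale_tri_def)

lemma
  shows lA_mult: "lA (a * a') m = lA a (lA a' m)"
    and lA_one: "lA 1 m = m"
    and lA_add_left: "lA (a + a') m = lA a m + lA a' m"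
    and lA_add_right: "lA a (m + m') = lA a m + lA a m'"
    and rB_mult: "rB m (b * b') = rB (rB m b) b'"
    and rB_one: "rB m 1 = m"
    and rB_add_right: "rB m (b + b') = rB m b + rB m b'"
    and rB_add_left: "rB (m + m') b = rB m b + rB m' b"
    and lA_rB_assoc: "lA a (rB m b) = rB (lA a m) b"
  using bimodule by (simp_all add: bimodule_def)

lemma
  shows sM_lA: "sM c (lA a m) = lA (sA c a) m" "sM c (lA a m) = lA a (sM c m)"
    and sM_rB: "sM c (rB m b) = rB m (sB c b)" "sM c (rB m b) = rB (sM c m) b"
  using bimodule unfolding bimodule_def by metis+

lemma
  shows sA_mult_left: "sA c x * y = sA c (x * y)"
    and sA_mult_right: "x * sA c y = sA c (x * y)"
    and sB_mult_left: "sB c x' * y' = sB c (x' * y')"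
    and sB_mult_right: "x' * sB c y' = sB c (x' * y')"
  using unital_A unital_B unfolding unital_algebra_def by metis+

lemma
  shows lA_zero_left [simp]: "lA 0 m = 0"
    and lA_zero_right [simp]: "lA a 0 = 0"
    and rB_zero_left [simp]: "rB 0 b = 0"
    and rB_zero_right [simp]: "rB m 0 = 0"
  using lA_add_left[of 0 0 m] lA_add_right[of a 0 0] rB_add_left[of 0 0 b] rB_add_right[of m 0 0]
  by simp_all

sublocale tri: vector_space scale_tri
proof -
  interpret A: module sA using unital_A by (simp add: unital_algebra_def)
  interpret B: module sB using unital_B by (simp add: unital_algebra_def)
  interpret M: module sM using bimodule by (simp add: bimodule_def)
  show "vector_space scale_tri"
    by unfold_locales
      (auto simp: scale_tri_def A.scale_right_distrib B.scale_right_distrib M.scale_right_distrib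
        A.scale_left_distrib B.scale_left_distrib M.scale_left_distrib)
qed

lemma double_eq_0_iff [simp]: "X + X = 0 \<longleftrightarrow> (X::('a,'m,'b) tri) = 0"
  using tri.scale_left_distrib[of 1 1 X] by (metis tri.scale_eq_0_iff tri.scale_one one_add_one zero_neq_numeral)

lemma tmul_assoc: "(X \<cdot> Y) \<cdot> Z = X \<cdot> (Y \<cdot> Z)"
  by (cases X; cases Y; cases Z) (simp add: algebra_simps lA_add_right rB_add_left lA_mult rB_mult lA_rB_assoc)

lemma tone_tmul [simp]: "tone \<cdot> X = X"
  by (cases X) (simp add: tone_def lA_one)

lemma tmul_tone [simp]: "X \<cdot> tone = X"
  by (cases X) (simp add: tone_def rB_one)

lemma module_hom_tmul_left: "module_hom scale_tri scale_tri (\<lambda>Y. X \<cdot> Y)"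
proof -
  interpret M: module sM using bimodule by (simp add: bimodule_def)
  show ?thesis
    by (unfold_locales; cases X)
      (auto simp: distrib_left lA_add_right rB_add_right M.scale_right_distrib sM_lA(2) sM_rB(1)
        sA_mult_right sB_mult_right)
qed

lemma module_hom_tmul_right: "module_hom scale_tri scale_tri (\<lambda>Y. Y \<cdot> X)"
proof -
  interpret M: module sM using bimodule by (simp add: bimodule_def)
  show ?thesis
    by (unfold_locales; cases X)
      (auto simp: distrib_right lA_add_left rB_add_left M.scale_right_distrib sM_lA(1) sM_rB(2)
        sA_mult_left sB_mult_left)
qed

sublocale tmul_left: module_hom scale_tri scale_tri "\<lambda>Y. X \<cdot> Y" for X
  by (rule module_hom_tmul_left)

sublocale tmul_right: module_hom scale_tri scale_tri "\<lambda>Y. Y \<cdot> X" for X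
  by (rule module_hom_tmul_right)

lemma module_hom_tmul_left_comp:
  "module_hom scale_tri scale_tri f \<Longrightarrow> module_hom scale_tri scale_tri (\<lambda>W. Z \<cdot> f W)"
  using tri.module_axioms by (simp add: module_hom_iff tmul_left.add tmul_left.scale)

lemma additive_tmul_left: "additive (\<lambda>Y. X \<cdot> Y)"
  by (simp add: additive_def tmul_left.add)

lemma tcenter_tmul_commute: "Z \<in> tcenter lA rB \<Longrightarrow> Z \<cdot> X = X \<cdot> Z"
  unfolding tcenter_def by blast

lemma tcenter_tmul_left_commute: "Z \<in> tcenter lA rB \<Longrightarrow> Z \<cdot> (X \<cdot> Y) = X \<cdot> (Z \<cdot> Y)"
  using tcenter_tmul_commute[of Z X] by (simp add: tmul_assoc[symmetric])

lemma tcenter_tmul: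
  assumes "Z \<in> tcenter lA rB" and "W \<in> tcenter lA rB"
  shows "Z \<cdot> W \<in> tcenter lA rB"
proof -
  have "(Z \<cdot> W) \<cdot> X = X \<cdot> (Z \<cdot> W)" for X
    using tcenter_tmul_commute[OF assms(2)] tcenter_tmul_left_commute[OF assms(1)]
    by (simp add: tmul_assoc)
  then show ?thesis
    unfolding tcenter_def by blast
qed

lemma two_sided_centralizer_central_tmul:
  assumes "Z \<in> tcenter lA rB" and "\<And>X. T X = Z \<cdot> X"
  shows "two_sided_centralizer lA rB T"
proof -
  have "T = (\<lambda>X. Z \<cdot> X)"
    using assms(2) by (rule ext)
  then show ?thesis
    using additive_tmul_left tcenter_tmul_left_commute[OF assms(1)]
    by (simp add: two_sided_centralizer_def tadditive_iff_additive tmul_assoc)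
qed

lemma left_invertible_cancel:
  assumes "\<delta> \<cdot> \<gamma> = tone" and "\<gamma> \<cdot> V = \<gamma> \<cdot> W"
  shows "V = W"
proof -
  have "V = (\<delta> \<cdot> \<gamma>) \<cdot> V"
    using assms(1) by simp
  also have "\<dots> = (\<delta> \<cdot> \<gamma>) \<cdot> W"
    using assms(2) by (simp only: tmul_assoc)
  finally show ?thesis
    using assms(1) by simp
qed

abbreviation unit_A :: "('a,'m,'b) tri" where "unit_A \<equiv> (1, 0, 0)"
abbreviation unit_B :: "('a,'m,'b) tri" where "unit_B \<equiv> (0, 0, 1)"

lemma eq_0_if_eq_double_idempotent_tmul:
  assumes "E \<cdot> E = E" and "V = E \<cdot> V + E \<cdot> V"
  shows "V = 0"
proof -
  from assms(2) have "E \<cdot> V = E \<cdot> (E \<cdot> V + E \<cdot> V)"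
    by (rule arg_cong)
  also have "\<dots> = (E \<cdot> E) \<cdot> V + (E \<cdot> E) \<cdot> V"
    by (simp only: tmul_left.add tmul_assoc)
  finally have "E \<cdot> V = 0"
    using assms(1) by simp
  then show ?thesis
    using assms(2) by simp
qed

lemma power_shift_tone:
  "(X + c *\<^sub>T tone) ^\<^sub>T j = (\<Sum>i\<le>j. (of_nat (j choose i) * c ^ (j - i)) *\<^sub>T X ^\<^sub>T i)"
proof (induction j)
  case 0
  show ?case by simp
next
  case (Suc j)
  define S where "S = (\<Sum>i\<le>j. (of_nat (j choose i) * c ^ (j - i)) *\<^sub>T X ^\<^sub>T i)"
  have "(X + c *\<^sub>T tone) ^\<^sub>T Suc j = X \<cdot> S + c *\<^sub>T S"
    using Suc by (simp add: S_def tmul_right.add tmul_right.scale)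
  also have "X \<cdot> S = (\<Sum>i\<le>j. (of_nat (j choose i) * c ^ (j - i)) *\<^sub>T X ^\<^sub>T Suc i)"
    by (simp add: S_def tmul_left.sum tmul_left.scale)
  also have "c *\<^sub>T S = (\<Sum>i\<le>Suc j. (of_nat (j choose i) * c ^ (Suc j - i)) *\<^sub>T X ^\<^sub>T i)"
    by (simp add: S_def tri.scale_sum_right Suc_diff_le mult.left_commute binomial_eq_0)
  finally have expand: "(X + c *\<^sub>T tone) ^\<^sub>T Suc j
      = (\<Sum>i\<le>j. (of_nat (j choose i) * c ^ (j - i)) *\<^sub>T X ^\<^sub>T Suc i)
        + (c ^ Suc j *\<^sub>T X ^\<^sub>T 0
           + (\<Sum>i\<le>j. (of_nat (j choose Suc i) * c ^ (j - i)) *\<^sub>T X ^\<^sub>T Suc i))"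
    by (simp add: sum.atMost_Suc_shift del: sum.atMost_Suc)
  have "(\<Sum>i\<le>Suc j. (of_nat (Suc j choose i) * c ^ (Suc j - i)) *\<^sub>T X ^\<^sub>T i)
      = c ^ Suc j *\<^sub>T X ^\<^sub>T 0
        + (\<Sum>i\<le>j. (of_nat (j choose i) * c ^ (j - i)) *\<^sub>T X ^\<^sub>T Suc i
                  + (of_nat (j choose Suc i) * c ^ (j - i)) *\<^sub>T X ^\<^sub>T Suc i)"
    by (simp add: sum.atMost_Suc_shift tri.scale_left_distrib[symmetric] distrib_right
        del: sum.atMost_Suc tpow.simps)
  then show ?case
    using expand by (simp add: sum.distrib algebra_simps del: tpow.simps)
qed

lemma additive_scale_of_nat: "additive F \<Longrightarrow> F (of_nat k *\<^sub>T X) = of_nat k *\<^sub>T F X"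
  by (induction k) (simp_all add: additive.add additive.zero tri.scale_left_distrib)

lemma additive_power_shift_tone:
  assumes "additive F"
  shows "F ((X + of_nat k *\<^sub>T tone) ^\<^sub>T j)
    = (\<Sum>i\<le>j. of_nat k ^ (j - i) *\<^sub>T of_nat (j choose i) *\<^sub>T F (X ^\<^sub>T i))"
proof -
  have "F ((of_nat (j choose i) * of_nat k ^ (j - i)) *\<^sub>T X ^\<^sub>T i)
      = of_nat k ^ (j - i) *\<^sub>T of_nat (j choose i) *\<^sub>T F (X ^\<^sub>T i)" for i
    using additive_scale_of_nat[OF assms, of "(j choose i) * k ^ (j - i)"] by (simp add: mult.commute)
  then show ?thesis
    by (simp add: power_shift_tone additive.sum[OF assms])
qed

text \<open>The coefficient of k^(m+1-i) after substituting X + k*1 for X; L covers both sides on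
  which the hypothesis may multiply by X.\<close>

lemma shifted_power_identity_coeff:
  assumes Psi: "additive \<Psi>" and Omega: "additive \<Omega>"
    and identity: "\<And>X. \<Psi> (X ^\<^sub>T Suc m) = L X (\<Omega> (X ^\<^sub>T m))"
    and L: "\<And>X. module_hom scale_tri scale_tri (L X)"
    and K: "module_hom scale_tri scale_tri K"
    and L_shift: "\<And>X c W. L (X + c *\<^sub>T tone) W = L X W + c *\<^sub>T K W"
    and "i \<le> Suc m"
  shows "of_nat (Suc m choose i) *\<^sub>T \<Psi> (X ^\<^sub>T i) =
     (case i of 0 \<Rightarrow> 0 | Suc j \<Rightarrow> of_nat (m choose j) *\<^sub>T L X (\<Omega> (X ^\<^sub>T j)))
      + of_nat (m choose i) *\<^sub>T K (\<Omega> (X ^\<^sub>T i))"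
proof -
  define A where "A i = (case i of 0 \<Rightarrow> 0 | Suc j \<Rightarrow> of_nat (m choose j) *\<^sub>T L X (\<Omega> (X ^\<^sub>T j)))" for i
  define B where "B i = of_nat (m choose i) *\<^sub>T K (\<Omega> (X ^\<^sub>T i))" for i
  have "of_nat (Suc m choose i) *\<^sub>T \<Psi> (X ^\<^sub>T i) - A i - B i = 0"
  proof (rule vector_space_poly_coeffs_eq_0_rev[OF tri.vector_space_axioms _ \<open>i \<le> Suc m\<close>])
    fix k :: nat
    define Y where "Y = X + of_nat k *\<^sub>T tone"
    interpret LX: module_hom scale_tri scale_tri "L X" by (rule L)
    interpret K: module_hom scale_tri scale_tri K by (rule K)
    have "L X (\<Omega> (Y ^\<^sub>T m)) = (\<Sum>j\<le>m. of_nat k ^ (m - j) *\<^sub>T A (Suc j))"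
      by (simp add: Y_def A_def additive_power_shift_tone[OF Omega] LX.sum LX.scale)
    also have "\<dots> = (\<Sum>i\<le>Suc m. of_nat k ^ (Suc m - i) *\<^sub>T A i)"
      by (simp add: sum.atMost_Suc_shift A_def del: sum.atMost_Suc)
    finally have L_part: "L X (\<Omega> (Y ^\<^sub>T m)) = (\<Sum>i\<le>Suc m. of_nat k ^ (Suc m - i) *\<^sub>T A i)" .
    have "of_nat k *\<^sub>T K (\<Omega> (Y ^\<^sub>T m)) = (\<Sum>i\<le>m. of_nat k ^ (Suc m - i) *\<^sub>T B i)"
      by (simp add: Y_def B_def additive_power_shift_tone[OF Omega] K.sum K.scale
          tri.scale_sum_right Suc_diff_le mult.assoc)
    also have "\<dots> = (\<Sum>i\<le>Suc m. of_nat k ^ (Suc m - i) *\<^sub>T B i)"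
      by (simp add: B_def binomial_eq_0)
    finally have K_part: "of_nat k *\<^sub>T K (\<Omega> (Y ^\<^sub>T m)) = (\<Sum>i\<le>Suc m. of_nat k ^ (Suc m - i) *\<^sub>T B i)" .
    have "\<Psi> (Y ^\<^sub>T Suc m) = L X (\<Omega> (Y ^\<^sub>T m)) + of_nat k *\<^sub>T K (\<Omega> (Y ^\<^sub>T m))"
      by (simp only: identity Y_def L_shift)
    also have "\<dots> = (\<Sum>i\<le>Suc m. of_nat k ^ (Suc m - i) *\<^sub>T A i) + (\<Sum>i\<le>Suc m. of_nat k ^ (Suc m - i) *\<^sub>T B i)"
      by (simp only: L_part K_part)
    finally have "(\<Sum>i\<le>Suc m. of_nat k ^ (Suc m - i) *\<^sub>T of_nat (Suc m choose i) *\<^sub>T \<Psi> (X ^\<^sub>T i))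
        = (\<Sum>i\<le>Suc m. of_nat k ^ (Suc m - i) *\<^sub>T A i) + (\<Sum>i\<le>Suc m. of_nat k ^ (Suc m - i) *\<^sub>T B i)"
      unfolding Y_def additive_power_shift_tone[OF Psi] .
    then show "(\<Sum>i\<le>Suc m. of_nat k ^ (Suc m - i) *\<^sub>T (of_nat (Suc m choose i) *\<^sub>T \<Psi> (X ^\<^sub>T i) - A i - B i)) = 0"
      by (simp add: tri.scale_right_diff_distrib sum_subtractf)
  qed
  then show ?thesis
    by (simp add: A_def B_def algebra_simps)
qed

end

locale faithful_triangular_algebra = triangular_algebra +
  assumes faithful_left: "faithful_left lA" and faithful_right: "faithful_right rB"

locale commuting_jordan_left_derivation = faithful_triangular_algebra sA sB sM lA rB
  for sA :: "'k::field_char_0 \<Rightarrow> 'a::ring_1 \<Rightarrow> 'a"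
    and sB :: "'k \<Rightarrow> 'b::ring_1 \<Rightarrow> 'b"
    and sM :: "'k \<Rightarrow> 'm::ab_group_add \<Rightarrow> 'm"
    and lA :: "'a \<Rightarrow> 'm \<Rightarrow> 'm"
    and rB :: "'m \<Rightarrow> 'b \<Rightarrow> 'm" +
  fixes D :: "('a,'m,'b) tri \<Rightarrow> ('a,'m,'b) tri"
  assumes additive: "additive D"
    and jordan: "D (X \<cdot> X) = X \<cdot> D X + X \<cdot> D X"
    and commuting: "X \<cdot> D X = D X \<cdot> X"
begin

sublocale D: additive D
  by (rule additive)

lemma linearized_jordan: "D (X \<cdot> Y + Y \<cdot> X) = (X \<cdot> D Y + Y \<cdot> D X) + (X \<cdot> D Y + Y \<cdot> D X)"
proof -
  have "D (X \<cdot> X) + D (X \<cdot> Y + Y \<cdot> X) + D (Y \<cdot> Y) = D ((X + Y) \<cdot> (X + Y))"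
    by (simp add: tmul_left.add tmul_right.add D.add add_ac)
  also have "\<dots> = (X + Y) \<cdot> D (X + Y) + (X + Y) \<cdot> D (X + Y)"
    by (rule jordan)
  also have "\<dots> = (X \<cdot> D X + X \<cdot> D Y + Y \<cdot> D X + Y \<cdot> D Y) + (X \<cdot> D X + X \<cdot> D Y + Y \<cdot> D X + Y \<cdot> D Y)"
    by (simp add: tmul_left.add tmul_right.add D.add add_ac)
  finally show ?thesis
    unfolding jordan by (simp add: algebra_simps)
qed

lemma linearized_commuting: "X \<cdot> D Y + Y \<cdot> D X = D X \<cdot> Y + D Y \<cdot> X"
proof -
  have "X \<cdot> D X + X \<cdot> D Y + Y \<cdot> D X + Y \<cdot> D Y = (X + Y) \<cdot> D (X + Y)"
    by (simp add: tmul_left.add tmul_right.add D.add add_ac)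
  also have "\<dots> = D (X + Y) \<cdot> (X + Y)"
    by (rule commuting)
  also have "\<dots> = D X \<cdot> X + D X \<cdot> Y + D Y \<cdot> X + D Y \<cdot> Y"
    by (simp add: tmul_left.add tmul_right.add D.add add_ac)
  finally show ?thesis
    using commuting[of X] commuting[of Y] by (simp add: algebra_simps)
qed

lemma linearized_jordan': "D (X \<cdot> Y + Y \<cdot> X) = (D X \<cdot> Y + D Y \<cdot> X) + (D X \<cdot> Y + D Y \<cdot> X)"
  using linearized_jordan linearized_commuting by simp

lemma D_tone: "D tone = 0"
  using jordan[of tone] by simp

lemma D_unit_A: "D unit_A = 0"
proof (rule eq_0_if_eq_double_idempotent_tmul)
  show idem: "unit_A \<cdot> unit_A = unit_A"
    by simp
  show "D unit_A = unit_A \<cdot> D unit_A + unit_A \<cdot> D unit_A"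
    using jordan[of unit_A] unfolding idem .
qed

lemma D_unit_B: "D unit_B = 0"
proof -
  have "unit_B = tone - unit_A"
    by (simp add: tone_def)
  then show ?thesis
    by (simp add: D.diff D_tone D_unit_A)
qed

lemma D_corner_M: "D (0, x, 0) = 0"
proof (rule eq_0_if_eq_double_idempotent_tmul)
  have "D (0, x, 0) = D (unit_A \<cdot> (0, x, 0) + (0, x, 0) \<cdot> unit_A)"
    by (simp add: lA_one)
  also have "\<dots> = unit_A \<cdot> D (0, x, 0) + unit_A \<cdot> D (0, x, 0)"
    unfolding linearized_jordan by (simp add: D_unit_A)
  finally show "D (0, x, 0) = unit_A \<cdot> D (0, x, 0) + unit_A \<cdot> D (0, x, 0)" .
qed simp

lemma D_corner_A: "D (a, 0, 0) = 0"
proof -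
  obtain x y z where V: "D (a, 0, 0) = (x, y, z)"
    by (cases "D (a, 0, 0)") auto
  have "(a, 0, 0) \<cdot> unit_B + unit_B \<cdot> (a, 0, 0) = 0"
    by (simp add: zero_prod_def)
  then have "D (a, 0, 0) \<cdot> unit_B = 0"
    using linearized_jordan'[of "(a, 0, 0)" unit_B] by (simp add: D.zero D_unit_B)
  then have "y = 0" and "z = 0"
    using V by (simp_all add: rB_one zero_prod_def)
  have "lA x m = 0" for m
  proof -
    have "(a, 0, 0) \<cdot> (0, m, 0) + (0, m, 0) \<cdot> (a, 0, 0) = (0, lA a m, 0)"
      by simp
    then have "D (a, 0, 0) \<cdot> (0, m, 0) = 0"
      using linearized_jordan'[of "(a, 0, 0)" "(0, m, 0)"] by (simp add: D_corner_M)
    then show ?thesis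
      using V \<open>y = 0\<close> \<open>z = 0\<close> by (simp add: zero_prod_def)
  qed
  then have "x = 0"
    using faithful_left by (simp add: faithful_left_def)
  then show ?thesis
    using V \<open>y = 0\<close> \<open>z = 0\<close> by (simp add: zero_prod_def)
qed

lemma D_corner_B: "D (0, 0, b) = 0"
proof -
  obtain x y z where V: "D (0, 0, b) = (x, y, z)"
    by (cases "D (0, 0, b)") auto
  have "(0, 0, b) \<cdot> unit_A + unit_A \<cdot> (0, 0, b) = 0"
    by (simp add: zero_prod_def)
  then have "unit_A \<cdot> D (0, 0, b) = 0"
    using linearized_jordan[of "(0, 0, b)" unit_A] by (simp add: D.zero D_unit_A)
  then have "x = 0" and "y = 0"
    using V by (simp_all add: lA_one zero_prod_def)
  have "rB m z = 0" for m
  proof -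
    have "(0, m, 0) \<cdot> (0, 0, b) + (0, 0, b) \<cdot> (0, m, 0) = (0, rB m b, 0)"
      by simp
    then have "(0, m, 0) \<cdot> D (0, 0, b) = 0"
      using linearized_jordan[of "(0, m, 0)" "(0, 0, b)"] by (simp add: D_corner_M)
    then show ?thesis
      using V \<open>x = 0\<close> \<open>y = 0\<close> by (simp add: zero_prod_def)
  qed
  then have "z = 0"
    using faithful_right by (simp add: faithful_right_def)
  then show ?thesis
    using V \<open>x = 0\<close> \<open>y = 0\<close> by (simp add: zero_prod_def)
qed

lemma eq_0: "D X = 0"
proof -
  obtain a x b where "X = (a, 0, 0) + (0, x, 0) + (0, 0, b)"
    by (cases X) simp
  then have "D X = D (a, 0, 0) + D (0, x, 0) + D (0, 0, b)"
    by (simp only: D.add)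
  then show ?thesis
    by (simp add: D_corner_A D_corner_M D_corner_B)
qed

end

lemma of_nat_choose_two: "of_nat (n choose 2) = of_nat n * (of_nat n - 1) / (2 :: 'k::field_char_0)"
proof (cases n)
  case (Suc k)
  have "2 * (Suc k choose 2) = Suc k * k"
    by (simp add: choose_two)
  then have "2 * of_nat (Suc k choose 2) = (of_nat (Suc k) * of_nat k :: 'k)"
    by (metis of_nat_mult of_nat_numeral)
  then show ?thesis
    using Suc by (simp add: field_simps)
qed simp

locale centralizer_power_identity = faithful_triangular_algebra sA sB sM lA rB
  for sA :: "'k::field_char_0 \<Rightarrow> 'a::ring_1 \<Rightarrow> 'a"
    and sB :: "'k \<Rightarrow> 'b::ring_1 \<Rightarrow> 'b"
    and sM :: "'k \<Rightarrow> 'm::ab_group_add \<Rightarrow> 'm"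
    and lA :: "'a \<Rightarrow> 'm \<Rightarrow> 'm"
    and rB :: "'m \<Rightarrow> 'b \<Rightarrow> 'm" +
  fixes m :: nat \<comment> \<open>the exponent n of the theorem is Suc m\<close>
    and \<gamma> :: "('a,'m,'b) tri"
    and \<Psi> \<Omega> :: "('a,'m,'b) tri \<Rightarrow> ('a,'m,'b) tri"
  assumes m_pos: "0 < m"
    and \<gamma>_central: "\<gamma> \<in> tcenter lA rB"
    and \<gamma>_left_invertible: "\<exists>\<delta>. tmul lA rB \<delta> \<gamma> = tone"
    and \<Psi>_additive: "additive \<Psi>" and \<Omega>_additive: "additive \<Omega>"
    and identity_left: "\<Psi> (tpow lA rB X (Suc m)) = tmul lA rB \<gamma> (tmul lA rB X (\<Omega> (tpow lA rB X m)))"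
    and identity_right: "\<Psi> (tpow lA rB X (Suc m)) = tmul lA rB \<gamma> (tmul lA rB (\<Omega> (tpow lA rB X m)) X)"
    and \<Omega>_tone_central: "\<Omega> tone \<in> tcenter lA rB"
begin

abbreviation \<omega> :: "('a,'m,'b) tri" where "\<omega> \<equiv> \<Omega> tone"

lemma \<gamma>_cancel: "\<gamma> \<cdot> V = \<gamma> \<cdot> W \<Longrightarrow> V = W"
  using \<gamma>_left_invertible left_invertible_cancel by blast

lemma identity_left_coeff:
  "i \<le> Suc m \<Longrightarrow> of_nat (Suc m choose i) *\<^sub>T \<Psi> (X ^\<^sub>T i) =
    (case i of 0 \<Rightarrow> 0 | Suc j \<Rightarrow> of_nat (m choose j) *\<^sub>T \<gamma> \<cdot> (X \<cdot> \<Omega> (X ^\<^sub>T j)))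
    + of_nat (m choose i) *\<^sub>T \<gamma> \<cdot> \<Omega> (X ^\<^sub>T i)"
  by (rule shifted_power_identity_coeff[where L="\<lambda>X W. \<gamma> \<cdot> (X \<cdot> W)" and K="\<lambda>W. \<gamma> \<cdot> W",
        OF \<Psi>_additive \<Omega>_additive identity_left])
    (auto intro: module_hom_tmul_left_comp module_hom_tmul_left tri.module_axioms
      simp: tmul_right.add tmul_right.scale tmul_left.add tmul_left.scale)

lemma identity_right_coeff:
  "i \<le> Suc m \<Longrightarrow> of_nat (Suc m choose i) *\<^sub>T \<Psi> (X ^\<^sub>T i) =
    (case i of 0 \<Rightarrow> 0 | Suc j \<Rightarrow> of_nat (m choose j) *\<^sub>T \<gamma> \<cdot> (\<Omega> (X ^\<^sub>T j) \<cdot> X))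
    + of_nat (m choose i) *\<^sub>T \<gamma> \<cdot> \<Omega> (X ^\<^sub>T i)"
  by (rule shifted_power_identity_coeff[where L="\<lambda>X W. \<gamma> \<cdot> (W \<cdot> X)" and K="\<lambda>W. \<gamma> \<cdot> W",
        OF \<Psi>_additive \<Omega>_additive identity_right])
    (auto intro: module_hom_tmul_left_comp module_hom_tmul_left module_hom_tmul_right
      simp: tmul_right.add tmul_right.scale tmul_left.add tmul_left.scale)

lemma identity_linear_coeff: "of_nat (Suc m) *\<^sub>T \<Psi> X = \<gamma> \<cdot> (X \<cdot> \<omega>) + of_nat m *\<^sub>T \<gamma> \<cdot> \<Omega> X"
  using identity_left_coeff[of 1 X] by simp

lemma tmul_\<Omega>_commute: "X \<cdot> \<Omega> X = \<Omega> X \<cdot> X"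
proof -
  have "of_nat m *\<^sub>T \<gamma> \<cdot> (X \<cdot> \<Omega> X) = of_nat m *\<^sub>T \<gamma> \<cdot> (\<Omega> X \<cdot> X)"
    using identity_left_coeff[of 2 X] identity_right_coeff[of 2 X] m_pos
    by (simp add: numeral_2_eq_2)
  then show ?thesis
    using m_pos by (simp add: \<gamma>_cancel)
qed

lemma \<Omega>_square: "\<Omega> (X \<cdot> X) = X \<cdot> \<Omega> X + X \<cdot> \<Omega> X - X \<cdot> X \<cdot> \<omega>"
proof -
  define a :: 'k where "a = of_nat m"
  define z where "z = \<Psi> (X \<cdot> X)"
  define u where "u = \<gamma> \<cdot> (X \<cdot> X \<cdot> \<omega>)"
  define v where "v = \<gamma> \<cdot> \<Omega> (X \<cdot> X)"
  define q where "q = \<gamma> \<cdot> (X \<cdot> \<Omega> X)"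
  have "a \<noteq> 0"
    using m_pos by (simp add: a_def)
  have linear: "(a + 1) *\<^sub>T z = u + a *\<^sub>T v"
    using identity_linear_coeff[of "X \<cdot> X"] by (simp add: a_def z_def u_def v_def add.commute)
  have quadratic: "((a + 1) * a / 2) *\<^sub>T z = a *\<^sub>T q + (a * (a - 1) / 2) *\<^sub>T v"
  proof -
    have "X ^\<^sub>T 2 = X \<cdot> X" and "X ^\<^sub>T 1 = X"
      by (simp_all add: numeral_2_eq_2)
    then show ?thesis
      using identity_left_coeff[of 2 X] m_pos
      by (simp add: a_def z_def v_def q_def of_nat_choose_two add.commute)
  qed
  have "(a + 1) *\<^sub>T z = (2 / a) *\<^sub>T ((a + 1) * a / 2) *\<^sub>T z"
    using \<open>a \<noteq> 0\<close> by simp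
  also have "\<dots> = (2 / a * a) *\<^sub>T q + (2 / a * (a * (a - 1) / 2)) *\<^sub>T v"
    by (simp only: quadratic tri.scale_right_distrib tri.scale_scale)
  also have "\<dots> = 2 *\<^sub>T q + (a - 1) *\<^sub>T v"
    using \<open>a \<noteq> 0\<close> by simp
  finally have "u + a *\<^sub>T v = 2 *\<^sub>T q + (a - 1) *\<^sub>T v"
    using linear by simp
  moreover have "2 *\<^sub>T q = q + q"
    using tri.scale_left_distrib[of 1 1 q] by simp
  moreover have "a *\<^sub>T v = v + (a - 1) *\<^sub>T v"
    using tri.scale_left_distrib[of 1 "a - 1" v] by simp
  ultimately have "(u + v) + (a - 1) *\<^sub>T v = (q + q) + (a - 1) *\<^sub>T v"
    by (simp only: add.assoc)
  then have "u + v = q + q"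
    by (rule add_right_imp_eq)
  then have "v = q + q - u"
    by (metis add_diff_cancel_left')
  then have "\<gamma> \<cdot> \<Omega> (X \<cdot> X) = \<gamma> \<cdot> (X \<cdot> \<Omega> X + X \<cdot> \<Omega> X - X \<cdot> X \<cdot> \<omega>)"
    by (simp only: u_def v_def q_def tmul_left.add tmul_left.diff)
  then show ?thesis
    by (rule \<gamma>_cancel)
qed

definition D :: "('a,'m,'b) tri \<Rightarrow> ('a,'m,'b) tri"
  where "D X = \<Omega> X - \<omega> \<cdot> X"

sublocale D: commuting_jordan_left_derivation sA sB sM lA rB D
proof unfold_locales
  fix X Y
  show "D (X + Y) = D X + D Y"
    by (simp add: D_def additive.add[OF \<Omega>_additive] tmul_left.add)
  have left: "X \<cdot> (\<omega> \<cdot> X) = \<omega> \<cdot> (X \<cdot> X)"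
    by (rule tcenter_tmul_left_commute[OF \<Omega>_tone_central, symmetric])
  have right: "X \<cdot> X \<cdot> \<omega> = \<omega> \<cdot> (X \<cdot> X)"
    by (rule tcenter_tmul_commute[OF \<Omega>_tone_central, symmetric])
  show "D (X \<cdot> X) = X \<cdot> D X + X \<cdot> D X"
    unfolding D_def \<Omega>_square tmul_left.diff left right by (simp add: algebra_simps)
  show "X \<cdot> D X = D X \<cdot> X"
    by (simp only: D_def tmul_left.diff tmul_right.diff left tmul_assoc tmul_\<Omega>_commute)
qed

lemma \<Omega>_eq: "\<Omega> X = \<omega> \<cdot> X"
  using D.eq_0[of X] by (simp add: D_def)

lemma \<Psi>_eq: "\<Psi> X = \<gamma> \<cdot> \<Omega> X"
proof -
  have "of_nat (Suc m) *\<^sub>T \<Psi> X = of_nat (Suc m) *\<^sub>T \<gamma> \<cdot> \<Omega> X"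
    using identity_linear_coeff[of X] \<Omega>_eq[of X] tcenter_tmul_commute[OF \<Omega>_tone_central, of X]
    by (simp add: tri.scale_left_distrib)
  then show ?thesis
    by (simp del: of_nat_Suc)
qed

lemma two_sided_centralizer_\<Omega>: "two_sided_centralizer lA rB \<Omega>"
  using \<Omega>_tone_central \<Omega>_eq by (rule two_sided_centralizer_central_tmul)

lemma two_sided_centralizer_\<Psi>: "two_sided_centralizer lA rB \<Psi>"
proof (rule two_sided_centralizer_central_tmul)
  show "\<gamma> \<cdot> \<omega> \<in> tcenter lA rB"
    using \<gamma>_central \<Omega>_tone_central by (rule tcenter_tmul)
  show "\<Psi> X = \<gamma> \<cdot> \<omega> \<cdot> X" for X
    using \<Psi>_eq[of X] \<Omega>_eq[of X] by (simp add: tmul_assoc)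
qed

end

theorem corollary2p2:
  fixes sA :: "'k::field_char_0 \<Rightarrow> 'a::ring_1 \<Rightarrow> 'a"
    and sB :: "'k \<Rightarrow> 'b::ring_1 \<Rightarrow> 'b"
    and sM :: "'k \<Rightarrow> 'm::ab_group_add \<Rightarrow> 'm"
    and lA :: "'a \<Rightarrow> 'm \<Rightarrow> 'm"
    and rB :: "'m \<Rightarrow> 'b \<Rightarrow> 'm"
    and n :: nat
    and \<gamma> :: "('a,'m,'b) tri"
    and \<Psi> \<Omega> :: "('a,'m,'b) tri \<Rightarrow> ('a,'m,'b) tri"
  assumes "unital_algebra sA" and "unital_algebra sB"
    and "bimodule sA sB sM lA rB"
    and "faithful_left lA" and "faithful_right rB"
    and "n > 1"
    and "\<gamma> \<in> tcenter lA rB"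
    and "\<exists>\<delta>. tmul lA rB \<gamma> \<delta> = tone \<and> tmul lA rB \<delta> \<gamma> = tone"
    and "tadditive \<Psi>" and "tadditive \<Omega>"
    and "\<And>X. \<Psi> (tpow lA rB X n) = tmul lA rB \<gamma> (tmul lA rB X (\<Omega> (tpow lA rB X (n - 1))))"
    and "\<And>X. \<Psi> (tpow lA rB X n) = tmul lA rB \<gamma> (tmul lA rB (\<Omega> (tpow lA rB X (n - 1))) X)"
    and "\<Omega> tone \<in> tcenter lA rB"
  shows "two_sided_centralizer lA rB \<Psi> \<and> two_sided_centralizer lA rB \<Omega>
         \<and> (\<forall>X. \<Psi> X = tmul lA rB \<gamma> (\<Omega> X))"
proof -
  obtain m where n: "n = Suc m" and "0 < m"
    using \<open>n > 1\<close> by (cases n) auto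
  interpret centralizer_power_identity sA sB sM lA rB m \<gamma> \<Psi> \<Omega>
    using assms n \<open>0 < m\<close> by unfold_locales (auto simp: tadditive_iff_additive additive_def)
  show ?thesis
    using two_sided_centralizer_\<Psi> two_sided_centralizer_\<Omega> \<Psi>_eq by blast
qed

end
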